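(* Let $(X,d)$ be a metric space, $q\geq 1$ a constant, and $T\subseteq X$ with $|T|=k\ge 2$. Then \[ \frac{k}{2}\,\mathrm{st}^q(T)\le \mathrm{cl}^q(T)\le 2^{q-1}k\,\mathrm{st}^q(T),\] and, if $k$ is even, \[ \frac{2(k-1)}{k}\,\mathrm{bp}^q(T)\le \mathrm{cl}^q(T)\le (2^q+1)\,\mathrm{bp}^q(T).\]
   Context: $d^q(u,v)=d(u,v)^q$. $\mathrm{cl}^q(T)=\sum_{\{u,v\}\subseteq T} d^q(u,v)$; $\mathrm{st}^q(T)=\min_{z\in T}\sum_{u\in T\setminus\{z\}} d^q(z,u)$; $\mathrm{bp}^q(T)=\min_{L\subseteq T,|L|=\lfloor |T|/2\rfloor}\sum_{\ell\in L,r\in T\setminus L} d^q(\ell,r)$. *)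

theory Defs
  imports "HOL-Analysis.Analysis"
begin

definition dq :: "real \<Rightarrow> 'a::metric_space \<Rightarrow> 'a \<Rightarrow> real" where
  "dq q u v = dist u v powr q"

text \<open>Clique cost: sum over unordered pairs {u,v} of distinct points of T
  (each unordered pair counted once: half the sum over ordered pairs).\<close>
definition clq :: "real \<Rightarrow> 'a::metric_space set \<Rightarrow> real" where
  "clq q T = (\<Sum>u\<in>T. \<Sum>v\<in>T - {u}. dq q u v) / 2"

definition stq :: "real \<Rightarrow> 'a::metric_space set \<Rightarrow> real" where
  "stq q T = (MIN z\<in>T. \<Sum>u\<in>T - {z}. dq q z u)"

definition bpq :: "real \<Rightarrow> 'a::metric_space set \<Rightarrow> real" where
  "bpq q T = (MIN L\<in>{L. L \<subseteq> T \<and> card L = card T div 2}.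
                 \<Sum>l\<in>L. \<Sum>r\<in>T - L. dq q l r)"

end

theory Submission
  imports Defs
begin

(* Summing the relaxed triangle inequality d^q(u,v) <= 2^(q-1) (d^q(u,z) + d^q(z,v)) over all
   pairs u, v bounds the clique cost by the star cost at any centre z; averaging z over the
   other side of a bisection bounds the pairs inside each half by the crossing pairs.
   Conversely, every row of the clique sum dominates the cheapest star, and a uniformly random
   m-subset L of k points has l in L and r outside L with probability m(k-m)/(k(k-1)) for each
   ordered pair l, r, so the cheapest bisection costs at most that fraction of all pairs. *)

lemma add_powr_le_two_powr:
  fixes a b q :: real
  assumes q: "q \<ge> 1" and a: "a \<ge> 0" and b: "b \<ge> 0"
  shows "(a + b) powr q \<le> 2 powr (q - 1) * (a powr q + b powr q)"
proof (cases "a = 0 \<or> b = 0")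
  case True
  have "1 \<le> 2 powr (q - 1)" using q by (intro ge_one_powr_ge_zero) auto
  from mult_right_mono[OF this powr_ge_zero] True show ?thesis by auto
next
  case False
  then have "((a + b) / 2) powr q \<le> (a powr q + b powr q) / 2"
    using convex_onD[OF powr_convex[OF q], of "1/2" a b] a b by (simp add: field_simps)
  then have "(a + b) powr q / 2 powr q \<le> (a powr q + b powr q) / 2"
    using a b by (simp add: powr_divide)
  then show ?thesis
    by (simp add: powr_diff field_simps)
qed

locale sym_relaxed_triangle =
  fixes w :: "'a \<Rightarrow> 'a \<Rightarrow> real" and c :: real
  assumes sym: "w u v = w v u"
    and relaxed_triangle: "w u v \<le> c * (w u z + w z v)"
begin

lemma double_sum_le_star:
  assumes "finite T"
  shows "(\<Sum>u\<in>T. \<Sum>v\<in>T. w u v) \<le> 2 * c * card T * (\<Sum>u\<in>T. w z u)"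
proof -
  have "(\<Sum>u\<in>T. \<Sum>v\<in>T. w u v) \<le> (\<Sum>u\<in>T. \<Sum>v\<in>T. c * (w z u + w z v))"
    by (intro sum_mono) (metis relaxed_triangle sym)
  also have "\<dots> = 2 * c * card T * (\<Sum>u\<in>T. w z u)"
    by (simp add: sum.distrib sum_distrib_left sum_distrib_right algebra_simps)
  finally show ?thesis .
qed

lemma double_sum_le_cross:
  assumes "finite P" "finite Q" "card P = card Q"
  shows "(\<Sum>u\<in>P. \<Sum>v\<in>P. w u v) \<le> 2 * c * (\<Sum>u\<in>P. \<Sum>r\<in>Q. w u r)"
proof (cases "P = {}")
  case False
  define g where "g u = (\<Sum>r\<in>Q. w u r)" for u
  have "card Q * (\<Sum>u\<in>P. \<Sum>v\<in>P. w u v) = (\<Sum>u\<in>P. \<Sum>v\<in>P. \<Sum>r\<in>Q. w u v)"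
    by (simp add: sum_distrib_left)
  also have "\<dots> \<le> (\<Sum>u\<in>P. \<Sum>v\<in>P. \<Sum>r\<in>Q. c * (w u r + w v r))"
    by (intro sum_mono) (metis relaxed_triangle sym)
  also have "\<dots> = card Q * (2 * c * sum g P)"
    using assms(3) by (simp add: g_def sum.distrib sum_distrib_left sum_distrib_right algebra_simps)
  finally have "card Q * (\<Sum>u\<in>P. \<Sum>v\<in>P. w u v) \<le> card Q * (2 * c * sum g P)" .
  moreover have "card Q > 0"
    using False assms(1) by (simp flip: assms(3) add: card_gt_0_iff)
  ultimately show ?thesis
    by (simp add: g_def)
qed (simp)

lemma double_sum_le_bisection:
  assumes "finite T" "L \<subseteq> T" "2 * card L = card T"
  shows "(\<Sum>u\<in>T. \<Sum>v\<in>T. w u v) \<le> 2 * (2 * c + 1) * (\<Sum>u\<in>L. \<Sum>v\<in>T - L. w u v)"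
proof -
  define R where "R = T - L"
  define X where "X = (\<Sum>u\<in>L. \<Sum>v\<in>R. w u v)"
  have fin: "finite L" "finite R"
    using assms(1,2) R_def finite_subset by auto
  have card_R: "card R = card L"
    using assms fin(1) by (simp add: R_def card_Diff_subset)
  have split: "(\<Sum>u\<in>T. f u) = (\<Sum>u\<in>L. f u) + (\<Sum>u\<in>R. f u)" for f :: "'a \<Rightarrow> real"
    using sum.subset_diff[OF assms(2,1), of f] by (simp add: R_def)
  have X_swap: "(\<Sum>u\<in>R. \<Sum>v\<in>L. w u v) = X"
    unfolding X_def by (subst sum.swap) (simp add: sym)
  have "(\<Sum>u\<in>T. \<Sum>v\<in>T. w u v)
      = (\<Sum>u\<in>L. \<Sum>v\<in>L. w u v) + (\<Sum>u\<in>R. \<Sum>v\<in>R. w u v) + 2 * X"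
    using X_swap by (simp add: split sum.distrib X_def)
  also have "\<dots> \<le> 2 * c * X + 2 * c * X + 2 * X"
    using double_sum_le_cross[OF fin card_R[symmetric]] double_sum_le_cross[OF fin(2,1) card_R]
    by (simp add: X_def X_swap)
  finally show ?thesis
    by (simp add: X_def R_def algebra_simps)
qed

end

lemma sym_relaxed_triangle_dq:
  assumes "q \<ge> 1"
  shows "sym_relaxed_triangle (dq q) (2 powr (q - 1))"
proof
  fix u v z :: 'a
  have "dist u v powr q \<le> (dist u z + dist z v) powr q"
    using assms by (intro powr_mono2) (auto intro: dist_triangle)
  also have "\<dots> \<le> 2 powr (q - 1) * (dist u z powr q + dist z v powr q)"
    using assms by (intro add_powr_le_two_powr) auto
  finally show "dq q u v \<le> 2 powr (q - 1) * (dq q u z + dq q z v)"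
    by (simp add: dq_def)
qed (auto simp: dq_def dist_commute)

lemma sum_cuts_eq_sum_separating:
  fixes w :: "'a \<Rightarrow> 'a \<Rightarrow> real"
  assumes "finite T" "finite F" "\<And>L. L \<in> F \<Longrightarrow> L \<subseteq> T"
  shows "(\<Sum>L\<in>F. \<Sum>l\<in>L. \<Sum>r\<in>T - L. w l r)
       = (\<Sum>l\<in>T. \<Sum>r\<in>T. card {L\<in>F. l \<in> L \<and> r \<notin> L} * w l r)"
proof -
  have "(\<Sum>l\<in>L. \<Sum>r\<in>T - L. w l r) = (\<Sum>l\<in>T. \<Sum>r\<in>T. of_bool (l \<in> L \<and> r \<notin> L) * w l r)"
    if "L \<in> F" for L
  proof -
    have "(\<Sum>l\<in>T. \<Sum>r\<in>T. of_bool (l \<in> L \<and> r \<notin> L) * w l r)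
        = (\<Sum>l\<in>T. of_bool (l \<in> L) * (\<Sum>r\<in>T. of_bool (r \<notin> L) * w l r))"
      by (simp only: of_bool_conj sum_distrib_left mult.assoc)
    also have "\<dots> = (\<Sum>l\<in>T \<inter> {l. l \<in> L}. \<Sum>r\<in>T \<inter> {r. r \<notin> L}. w l r)"
      using assms(1) by simp
    also have "\<dots> = (\<Sum>l\<in>L. \<Sum>r\<in>T - L. w l r)"
      using assms(3)[OF that] by (intro sum.cong) auto
    finally show ?thesis by simp
  qed
  then have "(\<Sum>L\<in>F. \<Sum>l\<in>L. \<Sum>r\<in>T - L. w l r)
      = (\<Sum>l\<in>T. \<Sum>r\<in>T. \<Sum>L\<in>F. of_bool (l \<in> L \<and> r \<notin> L) * w l r)"
    by (simp add: sum.swap[of _ F] cong: sum.cong)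
  also have "\<dots> = (\<Sum>l\<in>T. \<Sum>r\<in>T. card {L\<in>F. l \<in> L \<and> r \<notin> L} * w l r)"
    using assms(2) by (simp add: sum_distrib_right[symmetric] Int_def)
  finally show ?thesis .
qed

lemma card_separating_subsets:
  assumes "finite T" "l \<in> T" "r \<in> T" "l \<noteq> r" "m \<ge> 1"
  shows "card {L. L \<subseteq> T \<and> card L = m \<and> l \<in> L \<and> r \<notin> L} = (card T - 2) choose (m - 1)"
proof -
  let ?B = "{B. B \<subseteq> T - {l, r} \<and> card B = m - 1}"
  have "{L. L \<subseteq> T \<and> card L = m \<and> l \<in> L \<and> r \<notin> L} = insert l ` ?B"
  proof (intro equalityI subsetI)
    fix L assume "L \<in> {L. L \<subseteq> T \<and> card L = m \<and> l \<in> L \<and> r \<notin> L}"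
    then show "L \<in> insert l ` ?B"
      using assms(1) by (intro image_eqI[of _ _ "L - {l}"]) (auto dest: finite_subset)
  next
    fix L assume "L \<in> insert l ` ?B"
    then obtain B where "B \<subseteq> T - {l, r}" "card B = m - 1" "L = insert l B" by auto
    moreover have "finite B" "l \<notin> B"
      using \<open>B \<subseteq> T - {l, r}\<close> assms(1) finite_subset by blast+
    ultimately show "L \<in> {L. L \<subseteq> T \<and> card L = m \<and> l \<in> L \<and> r \<notin> L}"
      using assms by auto
  qed
  moreover have "inj_on (insert l) ?B"
    by (rule inj_on_inverseI[of _ "\<lambda>L. L - {l}"]) auto
  ultimately have "card {L. L \<subseteq> T \<and> card L = m \<and> l \<in> L \<and> r \<notin> L} = card (T - {l, r}) choose (m - 1)"
    using assms(1) by (simp add: card_image n_subsets)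
  also have "card (T - {l, r}) = card T - 2"
    using assms by (simp add: card_Diff_subset)
  finally show ?thesis .
qed

lemma sum_cuts_subsets_card:
  fixes w :: "'a \<Rightarrow> 'a \<Rightarrow> real"
  assumes "finite T" "m \<ge> 1"
  shows "(\<Sum>L | L \<subseteq> T \<and> card L = m. \<Sum>l\<in>L. \<Sum>r\<in>T - L. w l r)
       = ((card T - 2) choose (m - 1)) * (\<Sum>l\<in>T. \<Sum>r\<in>T - {l}. w l r)"
proof -
  let ?F = "{L. L \<subseteq> T \<and> card L = m}"
  let ?C = "(card T - 2) choose (m - 1)"
  have "finite ?F"
    using assms(1) by simp
  have row: "(\<Sum>r\<in>T. card {L\<in>?F. l \<in> L \<and> r \<notin> L} * w l r) = ?C * (\<Sum>r\<in>T - {l}. w l r)"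
    if "l \<in> T" for l
  proof -
    have "(\<Sum>r\<in>T. card {L\<in>?F. l \<in> L \<and> r \<notin> L} * w l r)
        = (\<Sum>r\<in>T - {l}. card {L\<in>?F. l \<in> L \<and> r \<notin> L} * w l r)"
      using sum.remove[OF assms(1) that, of "\<lambda>r. card {L\<in>?F. l \<in> L \<and> r \<notin> L} * w l r"]
      by simp
    also have "\<dots> = (\<Sum>r\<in>T - {l}. ?C * w l r)"
    proof (rule sum.cong[OF refl])
      fix r assume "r \<in> T - {l}"
      then have "r \<in> T" "l \<noteq> r"
        by auto
      then have "card {L\<in>?F. l \<in> L \<and> r \<notin> L} = ?C"
        using card_separating_subsets[OF assms(1) that _ _ assms(2)] by (simp add: conj_assoc)
      then show "card {L\<in>?F. l \<in> L \<and> r \<notin> L} * w l r = ?C * w l r"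
        by simp
    qed
    finally show ?thesis
      by (simp add: sum_distrib_left)
  qed
  have "(\<Sum>L\<in>?F. \<Sum>l\<in>L. \<Sum>r\<in>T - L. w l r)
      = (\<Sum>l\<in>T. \<Sum>r\<in>T. card {L\<in>?F. l \<in> L \<and> r \<notin> L} * w l r)"
    using \<open>finite ?F\<close> by (intro sum_cuts_eq_sum_separating assms(1)) blast+
  also have "\<dots> = (\<Sum>l\<in>T. ?C * (\<Sum>r\<in>T - {l}. w l r))"
    by (rule sum.cong[OF refl row])
  finally show ?thesis
    by (simp add: sum_distrib_left)
qed

lemma Min_cut_le_average:
  fixes w :: "'a \<Rightarrow> 'a \<Rightarrow> real"
  assumes "finite T" "card T = k" "1 \<le> m" "m \<le> k"
  shows "real k * (real k - 1) * (MIN L\<in>{L. L \<subseteq> T \<and> card L = m}. \<Sum>l\<in>L. \<Sum>r\<in>T - L. w l r)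
       \<le> real m * real (k - m) * (\<Sum>l\<in>T. \<Sum>r\<in>T - {l}. w l r)"
proof -
  define F where "F = {L. L \<subseteq> T \<and> card L = m}"
  define cut where "cut L = (\<Sum>l\<in>L. \<Sum>r\<in>T - L. w l r)" for L
  define A where "A = (\<Sum>l\<in>T. \<Sum>r\<in>T - {l}. w l r)"
  define C where "C = (k - 2) choose (m - 1)"
  have "finite F"
    using assms(1) unfolding F_def by simp
  have card_F: "card F = k choose m"
    using assms(1,2) by (simp add: F_def n_subsets)
  have "card F * Min (cut ` F) \<le> (\<Sum>L\<in>F. cut L)"
    using \<open>finite F\<close> by (intro sum_bounded_below) simp
  also have "\<dots> = C * A"
    using sum_cuts_subsets_card[OF assms(1,3), of w] assms(2) by (simp add: F_def cut_def A_def C_def)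
  finally have avg: "card F * Min (cut ` F) \<le> C * A" .
  have "(\<Sum>L\<in>F. \<Sum>l\<in>L. \<Sum>r\<in>T - L. 1::real) = C * (\<Sum>l\<in>T. \<Sum>r\<in>T - {l}. 1::real)"
    using sum_cuts_subsets_card[OF assms(1,3), of "\<lambda>_ _. 1"] by (simp only: F_def C_def assms(2))
  moreover have "(\<Sum>L\<in>F. \<Sum>l\<in>L. \<Sum>r\<in>T - L. 1::real) = card F * (real m * real (k - m))"
  proof -
    have "card (T - L) = k - m" if "L \<in> F" for L
      using that assms(1,2) unfolding F_def by (metis (mono_tags) card_Diff_subset finite_subset mem_Collect_eq)
    then show ?thesis
      by (simp add: F_def)
  qed
  moreover have "(\<Sum>l\<in>T. \<Sum>r\<in>T - {l}. 1::real) = real k * (real k - 1)"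
    using assms by (simp add: of_nat_diff)
  ultimately have count: "real k * (real k - 1) * C = card F * (real m * real (k - m))"
    by (metis mult.commute)
  have "real k * (real k - 1) * (card F * Min (cut ` F)) \<le> real k * (real k - 1) * (C * A)"
    using avg assms(3,4) by (intro mult_left_mono) auto
  also have "\<dots> = card F * (real m * real (k - m) * A)"
    by (simp only: mult.assoc[symmetric] count)
  finally have "card F * (real k * (real k - 1) * Min (cut ` F)) \<le> card F * (real m * real (k - m) * A)"
    by (simp add: algebra_simps)
  moreover have "card F > 0"
    using assms(4) by (simp add: card_F)
  ultimately show ?thesis
    by (simp add: F_def cut_def A_def)
qed

lemma clq_eq_double_sum: "finite T \<Longrightarrow> clq q T = (\<Sum>u\<in>T. \<Sum>v\<in>T. dq q u v) / 2"
  by (simp add: clq_def sum_diff1 dq_def)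

lemma clq_ge_stq:
  assumes "finite T"
  shows "card T / 2 * stq q T \<le> clq q T"
proof -
  have "card T * stq q T \<le> (\<Sum>u\<in>T. \<Sum>v\<in>T - {u}. dq q u v)"
    using assms by (intro sum_bounded_below) (simp add: stq_def)
  then show ?thesis
    by (simp add: clq_def)
qed

lemma clq_le_stq:
  assumes "q \<ge> 1" "finite T" "T \<noteq> {}"
  shows "clq q T \<le> 2 powr (q - 1) * card T * stq q T"
proof -
  have "stq q T \<in> (\<lambda>z. \<Sum>u\<in>T - {z}. dq q z u) ` T"
    unfolding stq_def using assms(2,3) by (intro Min_in) auto
  then obtain z where "stq q T = (\<Sum>u\<in>T - {z}. dq q z u)"
    by blast
  then have "stq q T = (\<Sum>u\<in>T. dq q z u)"
    using assms(2) by (simp add: sum_diff1 dq_def)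
  then show ?thesis
    using sym_relaxed_triangle.double_sum_le_star[OF sym_relaxed_triangle_dq[OF assms(1)] assms(2), of z]
    by (simp add: clq_eq_double_sum assms(2))
qed

lemma clq_ge_bpq:
  assumes "finite T" "card T = k" "even k" "k \<ge> 2"
  shows "2 * (real k - 1) / real k * bpq q T \<le> clq q T"
proof -
  have "real k * (real k - 1) * bpq q T \<le> real (k div 2) * real (k - k div 2) * (2 * clq q T)"
    using Min_cut_le_average[OF assms(1,2), of "k div 2" "dq q"] assms by (simp add: bpq_def clq_def)
  also have "real (k div 2) * real (k - k div 2) = real k * real k / 4"
    using assms(3) by (auto elim: evenE)
  finally have "real k * (2 * (real k - 1) * bpq q T) \<le> real k * (real k * clq q T)"
    by (simp add: algebra_simps)
  then have "2 * (real k - 1) * bpq q T \<le> real k * clq q T"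
    using assms(4) by (simp add: mult_le_cancel_left_pos)
  then show ?thesis
    using assms(4) by (simp add: field_simps)
qed

lemma clq_le_bpq:
  assumes "q \<ge> 1" "finite T" "even (card T)"
  shows "clq q T \<le> (2 powr q + 1) * bpq q T"
proof -
  let ?F = "{L. L \<subseteq> T \<and> card L = card T div 2}"
  have "finite ?F"
    using assms(2) by simp
  moreover have "?F \<noteq> {}"
    using obtain_subset_with_card_n[of "card T div 2" T] by auto
  ultimately have "bpq q T \<in> (\<lambda>L. \<Sum>l\<in>L. \<Sum>r\<in>T - L. dq q l r) ` ?F"
    unfolding bpq_def by (intro Min_in) auto
  then obtain L where L: "L \<subseteq> T" "2 * card L = card T" "bpq q T = (\<Sum>l\<in>L. \<Sum>r\<in>T - L. dq q l r)"
    using assms(3) by auto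
  have "2 * 2 powr (q - 1) = 2 powr q"
    by (simp add: powr_diff)
  then show ?thesis
    using sym_relaxed_triangle.double_sum_le_bisection[OF sym_relaxed_triangle_dq[OF assms(1)] assms(2) L(1,2)] L(3)
    by (simp add: clq_eq_double_sum assms(2) algebra_simps)
qed

theorem lemma4:
  fixes T :: "'a::metric_space set" and q :: real and k :: nat
  assumes "q \<ge> 1" and "finite T" and "card T = k" and "k \<ge> 2"
  shows "real k / 2 * stq q T \<le> clq q T
         \<and> clq q T \<le> 2 powr (q - 1) * real k * stq q T
         \<and> (even k \<longrightarrow>
              2 * (real k - 1) / real k * bpq q T \<le> clq q T
              \<and> clq q T \<le> (2 powr q + 1) * bpq q T)"
proof -
  have "T \<noteq> {}"
    using assms(3,4) by auto
  then show ?thesis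
    using clq_ge_stq[OF assms(2)] clq_le_stq[OF assms(1,2)] clq_ge_bpq[OF assms(2,3) _ assms(4)]
      clq_le_bpq[OF assms(1,2)] assms(3)
    by auto
qed

end
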